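(* Let $\xi$ be a continuous measure-valued martingale, and let $\varphi$ be a nonnegative measurable function on $\mathbb R^d$ such that $\mathbb E[\xi_0(\varphi)]<\infty$. Then $\xi(\varphi)=(\xi_t(\varphi))_{t\ge0}$ is a uniformly integrable continuous martingale.
   Context: $\mathcal P$ is the set of Borel probability measures on $\mathbb R^d$ with the weak topology; $\mu(\varphi)=\int\varphi\,d\mu$. A measure-valued martingale (MVM) is a $\mathcal P$-valued adapted process $\xi$ on a filtered probability space such that $\xi(\varphi)$ is a real-valued martingale for every bounded continuous $\varphi$; it is continuous if its trajectories are weakly continuous (equivalently, $\xi(\varphi)$ is continuous for each bounded continuous $\varphi$). *)

theory Defs
  imports "HOL-Probability.Probability"
begin

definition filtration_on :: "'w measure \<Rightarrow> (real \<Rightarrow> 'w measure) \<Rightarrow> bool" where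
  "filtration_on M F \<longleftrightarrow>
     (\<forall>t\<ge>0. space (F t) = space M \<and> sets (F t) \<subseteq> sets M) \<and>
     (\<forall>s t. 0 \<le> s \<longrightarrow> s \<le> t \<longrightarrow> sets (F s) \<subseteq> sets (F t))"

definition martingale :: "'w measure \<Rightarrow> (real \<Rightarrow> 'w measure) \<Rightarrow> (real \<Rightarrow> 'w \<Rightarrow> real) \<Rightarrow> bool" where
  "martingale M F X \<longleftrightarrow>
     (\<forall>t\<ge>0. X t \<in> borel_measurable (F t) \<and> integrable M (X t)) \<and>
     (\<forall>s t. 0 \<le> s \<longrightarrow> s \<le> t \<longrightarrow> (AE \<omega> in M. real_cond_exp M (F s) (X t) \<omega> = X s \<omega>))"

definition bcont :: "('d::euclidean_space \<Rightarrow> real) \<Rightarrow> bool" where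
  "bcont \<phi> \<longleftrightarrow> continuous_on UNIV \<phi> \<and> bounded (range \<phi>)"

definition mvm_eval :: "(real \<Rightarrow> 'w \<Rightarrow> 'd::euclidean_space measure) \<Rightarrow> ('d \<Rightarrow> real) \<Rightarrow> real \<Rightarrow> 'w \<Rightarrow> real" where
  "mvm_eval \<xi> \<phi> t \<omega> = (\<integral>x. \<phi> x \<partial>(\<xi> t \<omega>))"

text \<open>Measure-valued martingale: a P-valued adapted process (P = Borel probability
  measures on the space, with the Borel sigma-algebra of the weak topology, which coincides
  with the Giry sigma-algebra of subprob_algebra borel), such that \<xi>(\<phi>) is a martingale
  for every bounded continuous \<phi>.\<close>
definition MVM :: "'w measure \<Rightarrow> (real \<Rightarrow> 'w measure) \<Rightarrow> (real \<Rightarrow> 'w \<Rightarrow> 'd::euclidean_space measure) \<Rightarrow> bool" where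
  "MVM M F \<xi> \<longleftrightarrow>
     prob_space M \<and> filtration_on M F \<and>
     (\<forall>t\<ge>0. \<forall>\<omega>\<in>space M. prob_space (\<xi> t \<omega>) \<and> sets (\<xi> t \<omega>) = sets borel) \<and>
     (\<forall>t\<ge>0. \<xi> t \<in> measurable (F t) (subprob_algebra borel)) \<and>
     (\<forall>\<phi>. bcont \<phi> \<longrightarrow> martingale M F (mvm_eval \<xi> \<phi>))"

definition continuous_MVM :: "'w measure \<Rightarrow> (real \<Rightarrow> 'w measure) \<Rightarrow> (real \<Rightarrow> 'w \<Rightarrow> 'd::euclidean_space measure) \<Rightarrow> bool" where
  "continuous_MVM M F \<xi> \<longleftrightarrow> MVM M F \<xi> \<and>
     (\<forall>\<omega>\<in>space M. \<forall>\<phi>. bcont \<phi> \<longrightarrow> continuous_on {0..} (\<lambda>t. mvm_eval \<xi> \<phi> t \<omega>))"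

definition uniformly_integrable :: "'w measure \<Rightarrow> 'i set \<Rightarrow> ('i \<Rightarrow> 'w \<Rightarrow> real) \<Rightarrow> bool" where
  "uniformly_integrable M I X \<longleftrightarrow>
     (\<forall>t\<in>I. integrable M (X t)) \<and>
     ((\<lambda>K::real. SUP t\<in>I. \<integral>\<^sup>+\<omega>. ennreal \<bar>X t \<omega>\<bar> * indicator {\<omega>. K < \<bar>X t \<omega>\<bar>} \<omega> \<partial>M)
        \<longlongrightarrow> 0) at_top"

end

theory Submission
  imports Defs
begin

(* For B in F_s and s \<le> t, the martingale property of \<xi>(g) for bounded continuous g says
   that the measures A \<mapsto> E[1_B \<xi>_t(A)] and A \<mapsto> E[1_B \<xi>_s(A)] integrate such g alike;
   approximating indicators of open sets from below shows that they coincide, so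
   E[1_B \<xi>_t(\<psi>)] = E[1_B \<xi>_s(\<psi>)] for every nonnegative Borel \<psi>. This yields the
   martingale property of \<xi>(\<phi>), Doob's maximal inequality c P(sup_q \<xi>_q(\<psi>) > c) \<le> E \<xi>_0(\<psi>)
   over rational times q, and uniform integrability, because \<xi>_t(\<phi>) \<le> 2 \<xi>_t((\<phi> - n)^+)
   wherever \<xi>_t(\<phi>) > 2n. Continuity of t \<mapsto> \<xi>_t(\<psi>) passes from bounded continuous \<psi> to
   indicators of open sets, then of all Borel sets, and on to \<phi> through increasing limits
   \<psi>_n \<up> \<Psi>: the maximal inequality applied to \<Psi> - \<psi>_n makes the convergence
   \<xi>(\<psi>_n) \<up> \<xi>(\<Psi>) uniform in time almost surely. *)

lemma bcont_borel_measurable: "bcont g \<Longrightarrow> g \<in> borel_measurable borel"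
  unfolding bcont_def by (auto intro: borel_measurable_continuous_onI)

lemma le_on_nonneg_if_le_on_nonneg_rationals:
  fixes h :: "real \<Rightarrow> real"
  assumes "continuous_on {0..} h" "\<And>q. q \<in> \<rat> \<Longrightarrow> 0 \<le> q \<Longrightarrow> h q \<le> e" "0 \<le> t"
  shows "h t \<le> e"
proof -
  have "closure ({0..} \<inter> \<rat>) = {0::real..}"
    using closure_convex_Int_superset[of "{0::real..}" \<rat>] by (simp add: Rats_closure_real)
  then show ?thesis
    using continuous_le_on_closure[of "{0..} \<inter> \<rat>" h t e] assms by auto
qed

lemma bcont_incseq_approx_indicator_open:
  fixes U :: "'d::euclidean_space set"
  assumes U: "open U"
  obtains g where "\<And>n. bcont (g n)" "\<And>n x. 0 \<le> g n x" "\<And>x. incseq (\<lambda>n. g n x)"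
    "\<And>x. (SUP n. ennreal (g n x)) = indicator U x"
proof (cases "U = UNIV")
  case True
  show ?thesis
    by (rule that[of "\<lambda>n x. 1"]) (auto simp: True bcont_def)
next
  case False
  define g where "g n x = min 1 (real n * infdist x (- U))" for n x
  have closed_compl: "closed (- U)" "- U \<noteq> {}" using U False by auto
  show ?thesis
  proof (rule that[of g])
    fix n
    have "range (g n) \<subseteq> cball 0 1"
      by (auto simp: g_def dist_real_def infdist_nonneg)
    then show "bcont (g n)"
      unfolding bcont_def g_def by (auto intro!: continuous_intros bounded_subset[OF bounded_cball])
  next
    show "0 \<le> g n x" for n x
      by (simp add: g_def infdist_nonneg)
  next
    show "incseq (\<lambda>n. g n x)" for x
      unfolding g_def incseq_def
      by (intro allI impI min.mono order.refl mult_right_mono) (auto simp: infdist_nonneg)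
  next
    fix x
    show "(SUP n. ennreal (g n x)) = indicator U x"
    proof (cases "x \<in> U")
      case True
      then have "0 < infdist x (- U)"
        using in_closed_iff_infdist_zero[OF closed_compl, of x] infdist_nonneg[of x "- U"] by auto
      then obtain n where "1 < real n * infdist x (- U)"
        using ex_less_of_nat_mult by blast
      then have "g n x = 1" by (simp add: g_def)
      moreover have "g m x \<le> 1" for m by (simp add: g_def)
      ultimately have "(SUP n. ennreal (g n x)) = 1"
        by (intro antisym SUP_least) (auto intro!: SUP_upper2[of n])
      then show ?thesis using True by simp
    next
      case False
      then show ?thesis
        using in_closed_iff_infdist_zero[OF closed_compl, of x] by (simp add: g_def)
    qed
  qed
qed

lemma (in prob_space) nn_integral_le_twice_excess:
  assumes f: "f \<in> borel_measurable M"
    and large: "ennreal (2 * c) < (\<integral>\<^sup>+x. ennreal (f x) \<partial>M)"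
  shows "(\<integral>\<^sup>+x. ennreal (f x) \<partial>M) \<le> 2 * (\<integral>\<^sup>+x. ennreal (f x - c) \<partial>M)"
proof -
  let ?excess = "\<integral>\<^sup>+x. ennreal (f x - c) \<partial>M"
  have split: "ennreal (f x) \<le> ennreal c + ennreal (f x - c)" for x
  proof -
    have "ennreal (f x) \<le> ennreal (max 0 c + max 0 (f x - c))"
      by (intro ennreal_leI) linarith
    also have "\<dots> = ennreal c + ennreal (f x - c)"
      by (simp add: ennreal_plus)
    finally show ?thesis .
  qed
  have "(\<integral>\<^sup>+x. ennreal (f x) \<partial>M) \<le> (\<integral>\<^sup>+x. ennreal c + ennreal (f x - c) \<partial>M)"
    by (intro nn_integral_mono split)
  also have "\<dots> = ennreal c + ?excess"
    using f by (simp add: nn_integral_add emeasure_space_1)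
  finally have bound: "(\<integral>\<^sup>+x. ennreal (f x) \<partial>M) \<le> ennreal c + ?excess" .
  have "ennreal c \<le> ?excess"
  proof (rule ccontr)
    assume "\<not> ennreal c \<le> ?excess"
    then have excess_less: "?excess < ennreal c"
      by simp
    have "0 < c"
      using order.strict_trans1[OF zero_le excess_less] by simp
    have "ennreal c + ?excess \<le> ennreal c + ennreal c"
      by (rule add_left_mono[OF less_imp_le[OF excess_less]])
    also have "\<dots> = ennreal (2 * c)"
      using \<open>0 < c\<close> by (metis ennreal_plus less_imp_le mult_2)
    finally show False
      using bound large by simp
  qed
  then have "ennreal c + ?excess \<le> ?excess + ?excess"
    by (rule add_right_mono)
  then show ?thesis
    using order.trans[OF bound] by (simp add: mult_2)
qed

lemma tendsto_0_at_top_if_bounded_by_null_sequence: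
  fixes f :: "real \<Rightarrow> ennreal"
  assumes null: "G \<longlonglongrightarrow> 0" and bound: "\<And>n K. c * real n \<le> K \<Longrightarrow> f K \<le> G n"
  shows "(f \<longlongrightarrow> 0) at_top"
proof (rule order_tendstoI)
  fix a :: ennreal assume "0 < a"
  then obtain n where "G n < a"
    using order_tendstoD(2)[OF null] by (auto simp: eventually_sequentially)
  then have "f K < a" if "c * real n \<le> K" for K
    by (rule le_less_trans[OF bound[OF that]])
  then show "\<forall>\<^sub>F K in at_top. f K < a"
    unfolding eventually_at_top_linorder by blast
qed simp

lemma continuous_on_if_uniformly_approximated_from_below:
  fixes g :: "nat \<Rightarrow> 'a::topological_space \<Rightarrow> real"
  assumes cont: "\<And>m. continuous_on S (g m)"
    and mono: "\<And>n m t. n \<le> m \<Longrightarrow> t \<in> S \<Longrightarrow> g n t \<le> g m t"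
    and below: "\<And>m t. t \<in> S \<Longrightarrow> g m t \<le> G t"
    and close: "\<And>e. 0 < e \<Longrightarrow> \<exists>n. \<forall>t\<in>S. G t \<le> g n t + e"
  shows "continuous_on S G"
proof -
  have limit: "uniform_limit S g G sequentially"
    unfolding uniform_limit_iff
  proof (intro allI impI)
    fix e :: real assume "0 < e"
    then obtain n where n: "\<forall>t\<in>S. G t \<le> g n t + e / 2"
      using close[of "e / 2"] by auto
    have "dist (g m t) (G t) < e" if "n \<le> m" "t \<in> S" for m t
      using n mono[OF that] below[OF that(2)] \<open>0 < e\<close> that(2) by (auto simp: dist_real_def)
    then show "\<forall>\<^sub>F m in sequentially. \<forall>t\<in>S. dist (g m t) (G t) < e"
      unfolding eventually_sequentially by auto
  qed
  show ?thesis
    by (rule uniform_limit_theorem[OF always_eventually limit]) (auto intro: cont)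
qed

lemma SUP_le_if_close_on_nonneg_rationals:
  fixes a :: "nat \<Rightarrow> real \<Rightarrow> ennreal"
  assumes finite: "\<And>m t. 0 \<le> t \<Longrightarrow> a m t < \<infinity>"
    and cont: "\<And>m. continuous_on {0..} (\<lambda>t. enn2real (a m t))"
    and close: "\<forall>m. \<forall>q\<in>\<rat>. 0 \<le> q \<longrightarrow> a m q \<le> a n q + ennreal e"
    and e: "0 < e" and t: "0 \<le> t"
  shows "(SUP m. a m t) \<le> ennreal (enn2real (a n t) + e)"
proof -
  define g where "g m t = enn2real (a m t)" for m t
  have a_eq: "a m t = ennreal (g m t)" if "0 \<le> t" for m t
    using finite[OF that] by (simp add: g_def less_top)
  have "g m t - g n t \<le> e" for m
  proof (rule le_on_nonneg_if_le_on_nonneg_rationals[OF _ _ t])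
    show "continuous_on {0..} (\<lambda>t. g m t - g n t)"
      unfolding g_def by (intro continuous_intros cont)
    fix q :: real assume "q \<in> \<rat>" "0 \<le> q"
    then have "ennreal (g m q) \<le> ennreal (g n q) + ennreal e"
      using close a_eq by metis
    also have "\<dots> = ennreal (g n q + e)"
      using e by (simp add: ennreal_plus g_def)
    finally have "g m q \<le> g n q + e"
      using e by (subst (asm) ennreal_le_iff) (auto simp: g_def)
    then show "g m q - g n q \<le> e"
      by simp
  qed
  then have "a m t \<le> ennreal (g n t + e)" for m
    using a_eq[OF t] t by (simp add: ennreal_leI algebra_simps)
  then show ?thesis
    unfolding g_def by (blast intro: SUP_least)
qed

lemma continuous_on_enn2real_SUP_if_uniformly_close_on_rationals:
  fixes a :: "nat \<Rightarrow> real \<Rightarrow> ennreal"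
  assumes finite: "\<And>m t. 0 \<le> t \<Longrightarrow> a m t < \<infinity>"
    and cont: "\<And>m. continuous_on {0..} (\<lambda>t. enn2real (a m t))"
    and mono: "\<And>t. incseq (\<lambda>m. a m t)"
    and close: "\<And>e. 0 < e \<Longrightarrow> \<exists>n. \<forall>m. \<forall>q\<in>\<rat>. 0 \<le> q \<longrightarrow> a m q \<le> a n q + ennreal e"
  shows "(\<forall>t\<ge>0. (SUP m. a m t) < \<infinity>) \<and> continuous_on {0..} (\<lambda>t. enn2real (SUP m. a m t))"
proof -
  define g where "g m t = enn2real (a m t)" for m t
  have uniform: "\<exists>n. \<forall>t\<ge>0. (SUP m. a m t) \<le> ennreal (g n t + e)" if e: "0 < e" for e
    using close[OF e] SUP_le_if_close_on_nonneg_rationals[where a=a, OF finite cont _ e] unfolding g_def by blast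
  have SUP_finite: "(SUP m. a m t) < \<infinity>" if "0 \<le> t" for t
    using uniform[of 1] that by (auto intro: le_less_trans)
  have "continuous_on {0..} (\<lambda>t. enn2real (SUP m. a m t))"
  proof (rule continuous_on_if_uniformly_approximated_from_below)
    show "continuous_on {0..} (g m)" for m
      unfolding g_def by (rule cont)
    show "g n t \<le> g m t" if "n \<le> m" "t \<in> {0..}" for n m t
      using mono[of t] that finite unfolding g_def incseq_def by (auto intro: enn2real_mono)
    show "g m t \<le> enn2real (SUP m. a m t)" if "t \<in> {0..}" for m t
      using SUP_finite that unfolding g_def by (intro enn2real_mono) (auto intro: SUP_upper)
    show "\<exists>n. \<forall>t\<in>{0..}. enn2real (SUP m. a m t) \<le> g n t + e" if e: "0 < e" for e
    proof -
      obtain n where n: "\<forall>t\<ge>0. (SUP m. a m t) \<le> ennreal (g n t + e)"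
        using uniform[OF e] by blast
      have "enn2real (SUP m. a m t) \<le> g n t + e" if "t \<in> {0..}" for t
      proof (rule enn2real_leI)
        show "0 \<le> g n t + e"
          using \<open>0 < e\<close> by (simp add: g_def)
        show "(SUP m. a m t) \<le> ennreal (g n t + e)"
          using n that by simp
      qed
      then show ?thesis
        by blast
    qed
  qed
  then show ?thesis
    using SUP_finite by simp
qed

lemma first_passage_decomposition:
  fixes S :: "'i::linorder set"
  assumes "finite S"
  shows "disjoint_family_on (\<lambda>s. {x\<in>X. P s x \<and> (\<forall>r\<in>S. r < s \<longrightarrow> \<not> P r x)}) S"
    and "{x\<in>X. \<exists>s\<in>S. P s x} = (\<Union>s\<in>S. {x\<in>X. P s x \<and> (\<forall>r\<in>S. r < s \<longrightarrow> \<not> P r x)})"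
proof -
  have "x \<notin> {x\<in>X. P s x \<and> (\<forall>r\<in>S. r < s \<longrightarrow> \<not> P r x)} \<or> x \<notin> {x\<in>X. P r x \<and> (\<forall>r'\<in>S. r' < r \<longrightarrow> \<not> P r' x)}"
    if "s \<in> S" "r \<in> S" "s \<noteq> r" for s r x
    using that by (cases "r < s") auto
  then show "disjoint_family_on (\<lambda>s. {x\<in>X. P s x \<and> (\<forall>r\<in>S. r < s \<longrightarrow> \<not> P r x)}) S"
    by (auto simp: disjoint_family_on_def)
  show "{x\<in>X. \<exists>s\<in>S. P s x} = (\<Union>s\<in>S. {x\<in>X. P s x \<and> (\<forall>r\<in>S. r < s \<longrightarrow> \<not> P r x)})"
  proof (intro antisym subsetI)
    fix x assume x: "x \<in> {x\<in>X. \<exists>s\<in>S. P s x}"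
    let ?first = "Min {s\<in>S. P s x}"
    have "?first \<in> {s\<in>S. P s x}"
      using x assms by (intro Min_in) auto
    moreover have "\<And>r. r \<in> S \<Longrightarrow> P r x \<Longrightarrow> ?first \<le> r"
      using assms by (intro Min_le) auto
    ultimately show "x \<in> (\<Union>s\<in>S. {x\<in>X. P s x \<and> (\<forall>r\<in>S. r < s \<longrightarrow> \<not> P r x)})"
      using x by force
  qed auto
qed

lemma nn_integral_decseq_tendsto_0:
  assumes D: "\<And>n. D n \<in> borel_measurable N" "decseq D"
    and dominated: "\<And>n x. D n x \<le> f x"
    and f: "f \<in> borel_measurable N" "(\<integral>\<^sup>+x. f x \<partial>N) < \<infinity>"
    and lim: "\<And>x. f x < \<infinity> \<Longrightarrow> (\<lambda>n. D n x) \<longlonglongrightarrow> 0"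
  shows "(\<lambda>n. \<integral>\<^sup>+x. D n x \<partial>N) \<longlonglongrightarrow> 0"
proof -
  have "AE x in N. f x \<noteq> \<infinity>"
    using f by (intro nn_integral_PInf_AE) auto
  then have "AE x in N. (INF n. D n x) = 0"
  proof (rule eventually_mono)
    fix x assume "f x \<noteq> \<infinity>"
    have "decseq (\<lambda>n. D n x)"
      using decseq_SucD[OF D(2)] by (intro decseq_SucI) (simp add: le_fun_def)
    then have "(\<lambda>n. D n x) \<longlonglongrightarrow> (INF n. D n x)"
      by (rule LIMSEQ_INF)
    then show "(INF n. D n x) = 0"
      using lim \<open>f x \<noteq> \<infinity>\<close> LIMSEQ_unique by (auto simp: less_top)
  qed
  then have "(\<integral>\<^sup>+x. (INF n. D n x) \<partial>N) = (\<integral>\<^sup>+x. 0 \<partial>N)"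
    by (rule nn_integral_cong_AE)
  then have "(\<integral>\<^sup>+x. (INF n. D n x) \<partial>N) = 0"
    by simp
  moreover have "(\<integral>\<^sup>+x. (INF n. D n x) \<partial>N) = (INF n. \<integral>\<^sup>+x. D n x \<partial>N)"
  proof (rule nn_integral_monotone_convergence_INF_decseq[OF D(2) D(1)])
    have "(\<integral>\<^sup>+x. D n x \<partial>N) \<le> (\<integral>\<^sup>+x. f x \<partial>N)" for n
      by (intro nn_integral_mono dominated)
    then show "(\<integral>\<^sup>+x. D n x \<partial>N) < \<infinity>" for n
      using f(2) by (rule le_less_trans)
  qed
  moreover have "decseq (\<lambda>n. \<integral>\<^sup>+x. D n x \<partial>N)"
    using decseq_SucD[OF D(2)] by (intro decseq_SucI nn_integral_mono) (simp add: le_fun_def)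
  ultimately show ?thesis
    using LIMSEQ_INF by metis
qed

section \<open>Measure-valued martingales tested against Borel functions\<close>

lemma mvm_eval_nonneg: "(\<And>x. 0 \<le> \<phi> x) \<Longrightarrow> 0 \<le> mvm_eval \<xi> \<phi> t \<omega>"
  unfolding mvm_eval_def by (simp add: Bochner_Integration.integral_nonneg)

locale mvm =
  fixes M :: "'w measure" and F :: "real \<Rightarrow> 'w measure"
    and \<xi> :: "real \<Rightarrow> 'w \<Rightarrow> 'd::euclidean_space measure"
  assumes MVM: "MVM M F \<xi>"
begin

sublocale prob_space M
  using MVM unfolding MVM_def by auto

lemma space_F: "0 \<le> t \<Longrightarrow> space (F t) = space M"
  and sets_F_subset: "0 \<le> t \<Longrightarrow> sets (F t) \<subseteq> sets M"
  and sets_F_mono: "0 \<le> s \<Longrightarrow> s \<le> t \<Longrightarrow> sets (F s) \<subseteq> sets (F t)"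
  using MVM unfolding MVM_def filtration_on_def by auto

lemma subalgebra_F: "0 \<le> t \<Longrightarrow> subalgebra M (F t)"
  using space_F sets_F_subset unfolding subalgebra_def by auto

lemma sigma_finite_subalgebra_F: "0 \<le> t \<Longrightarrow> sigma_finite_subalgebra M (F t)"
  by (intro finite_measure_subalgebra_is_sigma_finite)
    (simp add: finite_measure_subalgebra_def finite_measure_subalgebra_axioms_def
      subalgebra_F finite_measure_axioms)

lemma prob_space_\<xi>: "0 \<le> t \<Longrightarrow> \<omega> \<in> space M \<Longrightarrow> prob_space (\<xi> t \<omega>)"
  and sets_\<xi>: "0 \<le> t \<Longrightarrow> \<omega> \<in> space M \<Longrightarrow> sets (\<xi> t \<omega>) = sets borel"
  and measurable_\<xi>_F: "0 \<le> t \<Longrightarrow> \<xi> t \<in> measurable (F t) (subprob_algebra borel)"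
  and martingale_bcont: "bcont g \<Longrightarrow> martingale M F (mvm_eval \<xi> g)"
  using MVM unfolding MVM_def by auto

lemma measurable_\<xi>: "0 \<le> t \<Longrightarrow> \<xi> t \<in> measurable M (subprob_algebra borel)"
  using measurable_from_subalg[OF subalgebra_F measurable_\<xi>_F] .

lemma borel_measurable_\<xi>:
  "0 \<le> t \<Longrightarrow> \<omega> \<in> space M \<Longrightarrow> f \<in> borel_measurable borel \<Longrightarrow> f \<in> borel_measurable (\<xi> t \<omega>)"
  by (simp add: measurable_cong_sets[OF sets_\<xi> refl])

abbreviation nn_eval :: "('d \<Rightarrow> ennreal) \<Rightarrow> real \<Rightarrow> 'w \<Rightarrow> ennreal" where
  "nn_eval \<psi> t \<omega> \<equiv> \<integral>\<^sup>+x. \<psi> x \<partial>\<xi> t \<omega>"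

lemma nn_eval_measurable_F:
  assumes "0 \<le> s" "s \<le> t" "\<psi> \<in> borel_measurable borel"
  shows "(\<lambda>\<omega>. nn_eval \<psi> s \<omega>) \<in> borel_measurable (F t)"
proof -
  have "subalgebra (F t) (F s)"
    using assms space_F sets_F_mono unfolding subalgebra_def by auto
  then show ?thesis
    using measurable_compose[OF measurable_\<xi>_F[OF assms(1)]
        nn_integral_measurable_subprob_algebra[OF assms(3)]]
    by (rule measurable_from_subalg)
qed

lemma nn_eval_measurable:
  "0 \<le> t \<Longrightarrow> \<psi> \<in> borel_measurable borel \<Longrightarrow> (\<lambda>\<omega>. nn_eval \<psi> t \<omega>) \<in> borel_measurable M"
  using measurable_compose[OF measurable_\<xi> nn_integral_measurable_subprob_algebra] .

lemma nn_eval_indicator: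
  assumes "A \<in> sets borel" "0 \<le> t" "\<omega> \<in> space M"
  shows "nn_eval (indicator A) t \<omega> = ennreal (measure (\<xi> t \<omega>) A)"
proof -
  interpret P: prob_space "\<xi> t \<omega>"
    using prob_space_\<xi> assms by auto
  show ?thesis
    using assms sets_\<xi> by (simp add: P.emeasure_eq_measure)
qed

lemma mvm_eval_eq_enn2real_nn_eval:
  assumes "0 \<le> t" "\<omega> \<in> space M" "\<phi> \<in> borel_measurable borel" "\<And>x. 0 \<le> \<phi> x"
  shows "mvm_eval \<xi> \<phi> t \<omega> = enn2real (nn_eval (\<lambda>x. ennreal (\<phi> x)) t \<omega>)"
  unfolding mvm_eval_def
  using assms by (intro integral_eq_nn_integral borel_measurable_\<xi>) auto

lemma nn_eval_bcont:
  assumes "0 \<le> t" "\<omega> \<in> space M" "bcont g" "\<And>x. 0 \<le> g x"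
  shows "nn_eval (\<lambda>x. ennreal (g x)) t \<omega> = ennreal (mvm_eval \<xi> g t \<omega>)"
proof -
  interpret P: prob_space "\<xi> t \<omega>"
    using prob_space_\<xi> assms by auto
  obtain B where "\<And>x. norm (g x) \<le> B"
    using \<open>bcont g\<close> unfolding bcont_def bounded_iff by auto
  then have "integrable (\<xi> t \<omega>) g"
    using assms by (intro P.integrable_const_bound[of _ B] borel_measurable_\<xi> bcont_borel_measurable) auto
  then show ?thesis
    unfolding mvm_eval_def by (rule nn_integral_eq_integral) (simp add: assms)
qed

lemma set_integral_eq_if_martingale:
  assumes "martingale M F X" "0 \<le> s" "s \<le> t" "B \<in> sets (F s)"
  shows "(\<integral>\<omega>\<in>B. X t \<omega> \<partial>M) = (\<integral>\<omega>\<in>B. X s \<omega> \<partial>M)"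
proof -
  interpret S: sigma_finite_subalgebra M "F s"
    using sigma_finite_subalgebra_F assms by auto
  have X: "integrable M (X t)" "X s \<in> borel_measurable (F s)"
    and cond_exp: "AE \<omega> in M. real_cond_exp M (F s) (X t) \<omega> = X s \<omega>"
    using assms unfolding martingale_def by auto
  have "(\<integral>\<omega>\<in>B. X t \<omega> \<partial>M) = (\<integral>\<omega>\<in>B. real_cond_exp M (F s) (X t) \<omega> \<partial>M)"
    by (rule S.real_cond_exp_intA[OF X(1) assms(4)])
  also have "\<dots> = (\<integral>\<omega>\<in>B. X s \<omega> \<partial>M)"
    using cond_exp assms(4) S.subalg measurable_from_subalg[OF S.subalg X(2)]
    by (intro set_lebesgue_integral_cong_AE) (auto simp: subalgebra_def)
  finally show ?thesis .
qed

lemma martingale_if_set_integral_eq: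
  assumes "\<And>t. 0 \<le> t \<Longrightarrow> X t \<in> borel_measurable (F t)" "\<And>t. 0 \<le> t \<Longrightarrow> integrable M (X t)"
    and "\<And>s t B. 0 \<le> s \<Longrightarrow> s \<le> t \<Longrightarrow> B \<in> sets (F s) \<Longrightarrow>
      (\<integral>\<omega>\<in>B. X t \<omega> \<partial>M) = (\<integral>\<omega>\<in>B. X s \<omega> \<partial>M)"
  shows "martingale M F X"
  unfolding martingale_def
proof (intro conjI allI impI)
  fix t :: real assume "0 \<le> t"
  then show "X t \<in> borel_measurable (F t)" "integrable M (X t)"
    using assms(1,2) by auto
next
  fix s t :: real assume st: "0 \<le> s" "s \<le> t"
  interpret S: sigma_finite_subalgebra M "F s"
    using sigma_finite_subalgebra_F st by auto
  show "AE \<omega> in M. real_cond_exp M (F s) (X t) \<omega> = X s \<omega>"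
  proof (rule S.real_cond_exp_charact)
    show "(\<integral>\<omega>\<in>B. X t \<omega> \<partial>M) = (\<integral>\<omega>\<in>B. X s \<omega> \<partial>M)" if "B \<in> sets (F s)" for B
      using assms(3)[OF st that] .
    show "integrable M (X t)" "integrable M (X s)" "X s \<in> borel_measurable (F s)"
      using assms(1,2) st by auto
  qed
qed

text \<open>\<open>mixture B t A = E[1\<^sub>B \<xi>\<^sub>t(A)]\<close>\<close>

definition mixture :: "'w set \<Rightarrow> real \<Rightarrow> 'd measure" where
  "mixture B t = density M (indicator B) \<bind> \<xi> t"

lemma measurable_\<xi>_density:
  "0 \<le> t \<Longrightarrow> \<xi> t \<in> measurable (density M f) (subprob_algebra borel)"
  using measurable_\<xi> by (simp add: measurable_cong_sets[OF sets_density refl])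

lemma sets_mixture: "0 \<le> t \<Longrightarrow> sets (mixture B t) = sets borel"
  unfolding mixture_def using sets_\<xi> not_empty by (intro sets_bind) auto

lemma nn_integral_mixture:
  assumes "0 \<le> t" "B \<in> sets M" "f \<in> borel_measurable borel"
  shows "(\<integral>\<^sup>+x. f x \<partial>mixture B t) = (\<integral>\<^sup>+\<omega>\<in>B. nn_eval f t \<omega> \<partial>M)"
  unfolding mixture_def
  using assms by (simp add: nn_integral_bind[OF _ measurable_\<xi>_density] nn_integral_density
      nn_eval_measurable mult.commute)

lemma emeasure_mixture_finite:
  assumes "0 \<le> t" "B \<in> sets M"
  shows "emeasure (mixture B t) UNIV \<noteq> \<infinity>"
proof -
  have "emeasure (mixture B t) UNIV = (\<integral>\<^sup>+x. indicator UNIV x \<partial>mixture B t)"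
    using sets_mixture[OF assms(1)] by (intro nn_integral_indicator[symmetric]) simp
  also have "\<dots> = (\<integral>\<^sup>+\<omega>\<in>B. nn_eval (indicator UNIV) t \<omega> \<partial>M)"
    using assms by (intro nn_integral_mixture) auto
  also have "\<dots> \<le> (\<integral>\<^sup>+\<omega>. 1 \<partial>M)"
    using assms by (intro nn_integral_mono) (auto simp: indicator_def
        prob_space.emeasure_space_1[OF prob_space_\<xi>])
  also have "\<dots> = 1"
    by (simp add: emeasure_space_1)
  finally show ?thesis
    by (auto simp: top_unique)
qed

lemma set_nn_integral_nn_eval_bcont_eq:
  assumes "0 \<le> s" "s \<le> t" "B \<in> sets (F s)" "bcont g" "\<And>x. 0 \<le> g x"
  shows "(\<integral>\<^sup>+\<omega>\<in>B. nn_eval (\<lambda>x. ennreal (g x)) t \<omega> \<partial>M)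
       = (\<integral>\<^sup>+\<omega>\<in>B. nn_eval (\<lambda>x. ennreal (g x)) s \<omega> \<partial>M)"
proof -
  have B: "B \<in> sets M"
    using sets_F_subset assms by auto
  have "(\<integral>\<^sup>+\<omega>\<in>B. nn_eval (\<lambda>x. ennreal (g x)) r \<omega> \<partial>M) = ennreal (\<integral>\<omega>\<in>B. mvm_eval \<xi> g r \<omega> \<partial>M)"
    if "0 \<le> r" for r
  proof -
    have "(\<integral>\<^sup>+\<omega>\<in>B. nn_eval (\<lambda>x. ennreal (g x)) r \<omega> \<partial>M) = (\<integral>\<^sup>+\<omega>\<in>B. mvm_eval \<xi> g r \<omega> \<partial>M)"
      using that assms by (intro nn_integral_cong) (simp add: nn_eval_bcont)
    also have "\<dots> = ennreal (\<integral>\<omega>\<in>B. mvm_eval \<xi> g r \<omega> \<partial>M)"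
      using martingale_bcont[OF assms(4)] that B assms(5)
      by (intro nn_set_integral_eq_set_integral) (auto simp: martingale_def mvm_eval_nonneg)
    finally show ?thesis .
  qed
  then show ?thesis
    using set_integral_eq_if_martingale[OF martingale_bcont[OF assms(4)] assms(1-3)] assms by simp
qed

lemma mixture_eq:
  assumes "0 \<le> s" "s \<le> t" "B \<in> sets (F s)"
  shows "mixture B t = mixture B s"
proof (rule measure_eqI_generator_eq[where E="{U. open U}" and \<Omega>=UNIV and A="\<lambda>_. UNIV"])
  have B: "B \<in> sets M"
    using sets_F_subset assms by auto
  show "Int_stable {U::'d set. open U}"
    by (auto simp: Int_stable_def)
  show "sets (mixture B t) = sigma_sets UNIV {U. open U}" "sets (mixture B s) = sigma_sets UNIV {U. open U}"
    using assms by (simp_all add: sets_mixture sets_borel)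
  show "emeasure (mixture B t) UNIV \<noteq> \<infinity>" for i :: nat
    using assms B by (intro emeasure_mixture_finite) auto
  fix U :: "'d set" assume "U \<in> {U. open U}"
  then have "open U"
    by simp
  then obtain g where g: "\<And>n. bcont (g n)" "\<And>n x. 0 \<le> g n x" "\<And>x. incseq (\<lambda>n. g n x)"
    "\<And>x. (SUP n. ennreal (g n x)) = indicator U x"
    using bcont_incseq_approx_indicator_open by blast
  have g_borel: "(\<lambda>x. ennreal (g n x)) \<in> borel_measurable borel" for n
    using bcont_borel_measurable[OF g(1)] by measurable
  have emeasure_U: "emeasure (mixture B r) U
      = (SUP n. \<integral>\<^sup>+\<omega>\<in>B. nn_eval (\<lambda>x. ennreal (g n x)) r \<omega> \<partial>M)"
    if "0 \<le> r" for r
  proof -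
    have g_meas: "(\<lambda>x. ennreal (g n x)) \<in> borel_measurable (mixture B r)" for n
      by (subst measurable_cong_sets[OF sets_mixture[OF that] refl]) (rule g_borel)
    have g_inc: "incseq (\<lambda>n x. ennreal (g n x))"
      using g(3) by (auto simp: incseq_def le_fun_def intro: ennreal_leI)
    have "emeasure (mixture B r) U = (\<integral>\<^sup>+x. indicator U x \<partial>mixture B r)"
      using \<open>open U\<close> sets_mixture[OF that] by (intro nn_integral_indicator[symmetric]) simp
    also have "\<dots> = (\<integral>\<^sup>+x. (SUP n. ennreal (g n x)) \<partial>mixture B r)"
      by (simp only: g(4))
    also have "\<dots> = (SUP n. \<integral>\<^sup>+x. ennreal (g n x) \<partial>mixture B r)"
      by (rule nn_integral_monotone_convergence_SUP[OF g_inc g_meas])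
    also have "\<dots> = (SUP n. \<integral>\<^sup>+\<omega>\<in>B. nn_eval (\<lambda>x. ennreal (g n x)) r \<omega> \<partial>M)"
      by (simp only: nn_integral_mixture[OF that B g_borel])
    finally show ?thesis .
  qed
  show "emeasure (mixture B t) U = emeasure (mixture B s) U"
    using emeasure_U[of t] emeasure_U[of s] assms set_nn_integral_nn_eval_bcont_eq[OF assms g(1,2)]
    by simp
qed auto

lemma set_nn_integral_nn_eval_eq:
  assumes "0 \<le> s" "s \<le> t" "B \<in> sets (F s)" "\<psi> \<in> borel_measurable borel"
  shows "(\<integral>\<^sup>+\<omega>\<in>B. nn_eval \<psi> t \<omega> \<partial>M) = (\<integral>\<^sup>+\<omega>\<in>B. nn_eval \<psi> s \<omega> \<partial>M)"
proof -
  have B: "B \<in> sets M"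
    using sets_F_subset assms by auto
  have "(\<integral>\<^sup>+\<omega>\<in>B. nn_eval \<psi> t \<omega> \<partial>M) = (\<integral>\<^sup>+x. \<psi> x \<partial>mixture B t)"
    using assms B by (intro nn_integral_mixture[symmetric]) auto
  also have "\<dots> = (\<integral>\<^sup>+x. \<psi> x \<partial>mixture B s)"
    by (simp only: mixture_eq[OF assms(1-3)])
  also have "\<dots> = (\<integral>\<^sup>+\<omega>\<in>B. nn_eval \<psi> s \<omega> \<partial>M)"
    using assms B by (intro nn_integral_mixture) auto
  finally show ?thesis .
qed

lemma nn_integral_nn_eval_eq_at_0:
  assumes "0 \<le> t" "\<psi> \<in> borel_measurable borel"
  shows "(\<integral>\<^sup>+\<omega>. nn_eval \<psi> t \<omega> \<partial>M) = (\<integral>\<^sup>+\<omega>. nn_eval \<psi> 0 \<omega> \<partial>M)"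
proof -
  have "space M \<in> sets (F 0)"
    using sets.top[of "F 0"] space_F[of 0] by simp
  then have "(\<integral>\<^sup>+\<omega>\<in>space M. nn_eval \<psi> t \<omega> \<partial>M) = (\<integral>\<^sup>+\<omega>\<in>space M. nn_eval \<psi> 0 \<omega> \<partial>M)"
    using assms by (intro set_nn_integral_nn_eval_eq) auto
  then show ?thesis
    by (simp only: nn_set_integral_space)
qed

lemma nn_eval_exceeds_in_F:
  assumes "0 \<le> r" "r \<le> t" "\<psi> \<in> borel_measurable borel"
  shows "{\<omega>\<in>space M. c < nn_eval \<psi> r \<omega>} \<in> sets (F t)"
proof -
  have "(\<lambda>\<omega>. nn_eval \<psi> r \<omega>) -` {c<..} \<inter> space (F t) \<in> sets (F t)"
    by (rule measurable_sets[OF nn_eval_measurable_F[OF assms]]) simp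
  moreover have "(\<lambda>\<omega>. nn_eval \<psi> r \<omega>) -` {c<..} \<inter> space (F t) = {\<omega>\<in>space M. c < nn_eval \<psi> r \<omega>}"
    using space_F assms by auto
  ultimately show ?thesis
    by simp
qed

lemma exceedance_set_measurable:
  assumes "countable S" "S \<subseteq> {0..}" "\<psi> \<in> borel_measurable borel"
  shows "{\<omega>\<in>space M. \<exists>s\<in>S. c < nn_eval \<psi> s \<omega>} \<in> sets M"
proof -
  have "{\<omega>\<in>space M. \<exists>s\<in>S. c < nn_eval \<psi> s \<omega>} = (\<Union>s\<in>S. {\<omega>\<in>space M. c < nn_eval \<psi> s \<omega>})"
    by auto
  also have "\<dots> \<in> sets M"
    using assms nn_eval_exceeds_in_F[of s s \<psi> c for s] sets_F_subset
    by (intro sets.countable_UN'') auto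
  finally show ?thesis .
qed

lemma maximal_inequality_finite:
  assumes S: "finite S" "S \<subseteq> {0..}" and \<psi>: "\<psi> \<in> borel_measurable borel"
  shows "c * emeasure M {\<omega>\<in>space M. \<exists>s\<in>S. c < nn_eval \<psi> s \<omega>} \<le> (\<integral>\<^sup>+\<omega>. nn_eval \<psi> 0 \<omega> \<partial>M)"
proof -
  define T where "T = Max (insert 0 S)"
  have T: "0 \<le> T" "\<And>s. s \<in> S \<Longrightarrow> s \<le> T"
    using S by (auto simp: T_def)
  define A where "A s = {\<omega>\<in>space M. c < nn_eval \<psi> s \<omega> \<and> (\<forall>r\<in>S. r < s \<longrightarrow> \<not> c < nn_eval \<psi> r \<omega>)}" for s
  have A_F: "A s \<in> sets (F s)" if "s \<in> S" for s
  proof -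
    have "A s = {\<omega>\<in>space M. c < nn_eval \<psi> s \<omega>} - (\<Union>r\<in>{r\<in>S. r < s}. {\<omega>\<in>space M. c < nn_eval \<psi> r \<omega>})"
      by (auto simp: A_def)
    also have "\<dots> \<in> sets (F s)"
      using S that \<psi> by (intro sets.Diff sets.finite_UN nn_eval_exceeds_in_F) auto
    finally show ?thesis .
  qed
  have A_M: "A s \<in> sets M" if "s \<in> S" for s
    using A_F[OF that] sets_F_subset[of s] that S by auto
  have disjoint: "disjoint_family_on A S"
    and cover: "{\<omega>\<in>space M. \<exists>s\<in>S. c < nn_eval \<psi> s \<omega>} = (\<Union>s\<in>S. A s)"
    unfolding A_def by (rule first_passage_decomposition[OF S(1)])+
  have "emeasure M (\<Union>s\<in>S. A s) = (\<Sum>s\<in>S. emeasure M (A s))"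
    using A_M disjoint S by (intro sum_emeasure[symmetric]) auto
  then have "c * emeasure M {\<omega>\<in>space M. \<exists>s\<in>S. c < nn_eval \<psi> s \<omega>} = (\<Sum>s\<in>S. c * emeasure M (A s))"
    by (simp add: cover sum_distrib_left)
  also have "\<dots> \<le> (\<Sum>s\<in>S. \<integral>\<^sup>+\<omega>\<in>A s. nn_eval \<psi> s \<omega> \<partial>M)"
  proof (rule sum_mono)
    fix s assume "s \<in> S"
    have "c * emeasure M (A s) = (\<integral>\<^sup>+\<omega>\<in>A s. c \<partial>M)"
      using A_M[OF \<open>s \<in> S\<close>] by (simp add: nn_integral_cmult_indicator)
    also have "\<dots> \<le> (\<integral>\<^sup>+\<omega>\<in>A s. nn_eval \<psi> s \<omega> \<partial>M)"
      by (intro nn_integral_mono) (auto simp: A_def indicator_def less_imp_le)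
    finally show "c * emeasure M (A s) \<le> (\<integral>\<^sup>+\<omega>\<in>A s. nn_eval \<psi> s \<omega> \<partial>M)" .
  qed
  also have "\<dots> = (\<Sum>s\<in>S. \<integral>\<^sup>+\<omega>\<in>A s. nn_eval \<psi> T \<omega> \<partial>M)"
    using S T A_F \<psi> by (intro sum.cong refl set_nn_integral_nn_eval_eq[symmetric]) auto
  also have "\<dots> = (\<integral>\<^sup>+\<omega>. nn_eval \<psi> T \<omega> * (\<Sum>s\<in>S. indicator (A s) \<omega>) \<partial>M)"
    using A_M nn_eval_measurable[OF T(1) \<psi>]
    by (simp add: nn_integral_sum[symmetric] sum_distrib_left)
  also have "\<dots> = (\<integral>\<^sup>+\<omega>\<in>(\<Union>s\<in>S. A s). nn_eval \<psi> T \<omega> \<partial>M)"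
    using S disjoint by (simp add: indicator_UN_disjoint)
  also have "\<dots> \<le> (\<integral>\<^sup>+\<omega>. nn_eval \<psi> T \<omega> \<partial>M)"
    by (intro nn_integral_mono) (simp add: indicator_def)
  also have "\<dots> = (\<integral>\<^sup>+\<omega>. nn_eval \<psi> 0 \<omega> \<partial>M)"
    using T(1) \<psi> by (rule nn_integral_nn_eval_eq_at_0)
  finally show ?thesis .
qed

lemma maximal_inequality:
  assumes S: "countable S" "S \<subseteq> {0..}" and \<psi>: "\<psi> \<in> borel_measurable borel"
  shows "c * emeasure M {\<omega>\<in>space M. \<exists>s\<in>S. c < nn_eval \<psi> s \<omega>} \<le> (\<integral>\<^sup>+\<omega>. nn_eval \<psi> 0 \<omega> \<partial>M)"
proof (cases "S = {}")
  case False
  define E where "E k = {\<omega>\<in>space M. \<exists>s\<in>from_nat_into S ` {..k}. c < nn_eval \<psi> s \<omega>}" for k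
  have range: "range (from_nat_into S) = S"
    using False S by (simp add: range_from_nat_into)
  have E_M: "E k \<in> sets M" for k
    unfolding E_def using range S \<psi> by (intro exceedance_set_measurable) auto
  have "E k \<subseteq> E (Suc k)" for k
  proof -
    have "from_nat_into S ` {..k} \<subseteq> from_nat_into S ` {..Suc k}"
      by (intro image_mono) auto
    then show ?thesis
      unfolding E_def by blast
  qed
  then have "incseq E"
    by (rule incseq_SucI)
  have "(\<Union>k. E k) = {\<omega>\<in>space M. \<exists>s\<in>range (from_nat_into S). c < nn_eval \<psi> s \<omega>}"
    unfolding E_def by blast
  then have "emeasure M {\<omega>\<in>space M. \<exists>s\<in>S. c < nn_eval \<psi> s \<omega>} = emeasure M (\<Union>k. E k)"
    by (simp only: range)
  also have "\<dots> = (SUP k. emeasure M (E k))"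
    using E_M \<open>incseq E\<close> by (intro SUP_emeasure_incseq[symmetric]) auto
  finally have "c * emeasure M {\<omega>\<in>space M. \<exists>s\<in>S. c < nn_eval \<psi> s \<omega>} = (SUP k. c * emeasure M (E k))"
    by (simp add: SUP_mult_left_ennreal)
  also have "\<dots> \<le> (\<integral>\<^sup>+\<omega>. nn_eval \<psi> 0 \<omega> \<partial>M)"
    unfolding E_def using range S \<psi> by (intro SUP_least maximal_inequality_finite) auto
  finally show ?thesis .
qed simp

lemma nn_integral_nn_eval_tendsto_0:
  assumes D: "\<And>n. D n \<in> borel_measurable borel" "decseq D"
    and dominated: "\<And>n x. D n x \<le> f x"
    and f: "f \<in> borel_measurable borel" "(\<integral>\<^sup>+\<omega>. nn_eval f 0 \<omega> \<partial>M) < \<infinity>"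
    and lim: "\<And>x. f x < \<infinity> \<Longrightarrow> (\<lambda>n. D n x) \<longlonglongrightarrow> 0"
  shows "(\<lambda>n. \<integral>\<^sup>+\<omega>. nn_eval (D n) 0 \<omega> \<partial>M) \<longlonglongrightarrow> 0"
proof -
  let ?\<nu> = "mixture (space M) 0"
  have \<nu>_eq: "(\<integral>\<^sup>+\<omega>. nn_eval h 0 \<omega> \<partial>M) = (\<integral>\<^sup>+x. h x \<partial>?\<nu>)" if "h \<in> borel_measurable borel" for h
    using nn_integral_mixture[of 0 "space M" h] that by simp
  have \<nu>_meas: "h \<in> borel_measurable ?\<nu>" if "h \<in> borel_measurable borel" for h
    using that by (subst measurable_cong_sets[OF sets_mixture refl]) auto
  have "(\<lambda>n. \<integral>\<^sup>+x. D n x \<partial>?\<nu>) \<longlonglongrightarrow> 0"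
  proof (rule nn_integral_decseq_tendsto_0[OF \<nu>_meas[OF D(1)] D(2) dominated \<nu>_meas[OF f(1)]])
    show "(\<integral>\<^sup>+x. f x \<partial>?\<nu>) < \<infinity>"
      using f by (simp add: \<nu>_eq)
  qed (rule lim)
  then show ?thesis
    using \<nu>_eq[OF D(1)] by simp
qed

lemma mvm_eval_measurable_F:
  assumes "0 \<le> t" "\<phi> \<in> borel_measurable borel" "\<And>x. 0 \<le> \<phi> x"
  shows "mvm_eval \<xi> \<phi> t \<in> borel_measurable (F t)"
proof -
  have "(\<lambda>\<omega>. enn2real (nn_eval (\<lambda>x. ennreal (\<phi> x)) t \<omega>)) \<in> borel_measurable (F t)"
    using nn_eval_measurable_F[OF assms(1) order.refl, of "\<lambda>x. ennreal (\<phi> x)"] assms(2) by measurable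
  then show ?thesis
    using assms space_F by (subst measurable_cong) (auto simp: mvm_eval_eq_enn2real_nn_eval)
qed

lemma mvm_eval_le_twice_excess:
  assumes "0 \<le> t" "\<omega> \<in> space M" "\<phi> \<in> borel_measurable borel" "\<And>x. 0 \<le> \<phi> x"
    and "0 \<le> c" "2 * c < mvm_eval \<xi> \<phi> t \<omega>"
  shows "ennreal (mvm_eval \<xi> \<phi> t \<omega>) \<le> 2 * nn_eval (\<lambda>x. ennreal (\<phi> x - c)) t \<omega>"
proof (cases "nn_eval (\<lambda>x. ennreal (\<phi> x)) t \<omega> = \<infinity>")
  case False
  then have eq: "ennreal (mvm_eval \<xi> \<phi> t \<omega>) = nn_eval (\<lambda>x. ennreal (\<phi> x)) t \<omega>"
    using assms(1-4) by (simp add: mvm_eval_eq_enn2real_nn_eval ennreal_enn2real_if)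
  have "ennreal (2 * c) < nn_eval (\<lambda>x. ennreal (\<phi> x)) t \<omega>"
    using assms(5,6) by (simp add: eq[symmetric] ennreal_less_iff)
  then show ?thesis
    unfolding eq using assms(1-3)
    by (intro prob_space.nn_integral_le_twice_excess prob_space_\<xi> borel_measurable_\<xi>)
next
  case True \<comment> \<open>then \<open>\<phi>\<close> is not \<open>\<xi> t \<omega>\<close>-integrable and its Bochner integral is \<open>0\<close>\<close>
  then show ?thesis
    using assms(1-4) by (simp add: mvm_eval_eq_enn2real_nn_eval)
qed

lemma tail_integral_mvm_eval_le:
  assumes "0 \<le> t" "\<phi> \<in> borel_measurable borel" "\<And>x. 0 \<le> \<phi> x" "0 \<le> c" "2 * c \<le> K"
  shows "(\<integral>\<^sup>+\<omega>. ennreal \<bar>mvm_eval \<xi> \<phi> t \<omega>\<bar> * indicator {\<omega>. K < \<bar>mvm_eval \<xi> \<phi> t \<omega>\<bar>} \<omega> \<partial>M)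
    \<le> 2 * (\<integral>\<^sup>+\<omega>. nn_eval (\<lambda>x. ennreal (\<phi> x - c)) 0 \<omega> \<partial>M)"
proof -
  have excess_borel: "(\<lambda>x. ennreal (\<phi> x - c)) \<in> borel_measurable borel"
    using assms(2) by measurable
  have "ennreal \<bar>mvm_eval \<xi> \<phi> t \<omega>\<bar> * indicator {\<omega>. K < \<bar>mvm_eval \<xi> \<phi> t \<omega>\<bar>} \<omega>
      \<le> 2 * nn_eval (\<lambda>x. ennreal (\<phi> x - c)) t \<omega>" if "\<omega> \<in> space M" for \<omega>
  proof (cases "K < mvm_eval \<xi> \<phi> t \<omega>")
    case True
    then have "ennreal (mvm_eval \<xi> \<phi> t \<omega>) \<le> 2 * nn_eval (\<lambda>x. ennreal (\<phi> x - c)) t \<omega>"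
      using that assms by (intro mvm_eval_le_twice_excess) auto
    then show ?thesis
      using True by (simp add: mvm_eval_nonneg assms(3))
  next
    case False
    then show ?thesis
      by (simp add: mvm_eval_nonneg assms(3))
  qed
  then have "(\<integral>\<^sup>+\<omega>. ennreal \<bar>mvm_eval \<xi> \<phi> t \<omega>\<bar> * indicator {\<omega>. K < \<bar>mvm_eval \<xi> \<phi> t \<omega>\<bar>} \<omega> \<partial>M)
      \<le> (\<integral>\<^sup>+\<omega>. 2 * nn_eval (\<lambda>x. ennreal (\<phi> x - c)) t \<omega> \<partial>M)"
    by (intro nn_integral_mono)
  also have "\<dots> = 2 * (\<integral>\<^sup>+\<omega>. nn_eval (\<lambda>x. ennreal (\<phi> x - c)) t \<omega> \<partial>M)"
    by (rule nn_integral_cmult[OF nn_eval_measurable[OF assms(1) excess_borel]])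
  also have "\<dots> = 2 * (\<integral>\<^sup>+\<omega>. nn_eval (\<lambda>x. ennreal (\<phi> x - c)) 0 \<omega> \<partial>M)"
    by (simp only: nn_integral_nn_eval_eq_at_0[OF assms(1) excess_borel])
  finally show ?thesis .
qed

context
  fixes \<phi> :: "'d \<Rightarrow> real"
  assumes \<phi>_borel: "\<phi> \<in> borel_measurable borel" and \<phi>_nonneg: "\<And>x. 0 \<le> \<phi> x"
    and \<phi>_finite: "(\<integral>\<^sup>+\<omega>. nn_eval (\<lambda>x. ennreal (\<phi> x)) 0 \<omega> \<partial>M) < \<infinity>"
begin

lemma nn_integral_nn_eval_finite:
  assumes "0 \<le> t"
  shows "(\<integral>\<^sup>+\<omega>. nn_eval (\<lambda>x. ennreal (\<phi> x)) t \<omega> \<partial>M) < \<infinity>"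
  using \<phi>_finite nn_integral_nn_eval_eq_at_0[OF assms, of "\<lambda>x. ennreal (\<phi> x)"] \<phi>_borel by simp

lemma integrable_mvm_eval:
  assumes "0 \<le> t"
  shows "integrable M (mvm_eval \<xi> \<phi> t)"
proof (rule integrableI_nonneg)
  show "mvm_eval \<xi> \<phi> t \<in> borel_measurable M"
    using mvm_eval_measurable_F[OF assms \<phi>_borel \<phi>_nonneg] by (rule measurable_from_subalg[OF subalgebra_F[OF assms]])
  show "AE \<omega> in M. 0 \<le> mvm_eval \<xi> \<phi> t \<omega>"
    by (simp add: mvm_eval_nonneg \<phi>_nonneg)
  have "(\<integral>\<^sup>+\<omega>. ennreal (mvm_eval \<xi> \<phi> t \<omega>) \<partial>M) \<le> (\<integral>\<^sup>+\<omega>. nn_eval (\<lambda>x. ennreal (\<phi> x)) t \<omega> \<partial>M)"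
    using assms \<phi>_borel \<phi>_nonneg
    by (intro nn_integral_mono) (simp add: mvm_eval_eq_enn2real_nn_eval ennreal_enn2real_if)
  then show "(\<integral>\<^sup>+\<omega>. ennreal (mvm_eval \<xi> \<phi> t \<omega>) \<partial>M) < \<infinity>"
    using nn_integral_nn_eval_finite[OF assms] by (rule le_less_trans)
qed

lemma set_integral_mvm_eval:
  assumes "0 \<le> t" "B \<in> sets M"
  shows "ennreal (\<integral>\<omega>\<in>B. mvm_eval \<xi> \<phi> t \<omega> \<partial>M) = (\<integral>\<^sup>+\<omega>\<in>B. nn_eval (\<lambda>x. ennreal (\<phi> x)) t \<omega> \<partial>M)"
proof -
  have "AE \<omega> in M. nn_eval (\<lambda>x. ennreal (\<phi> x)) t \<omega> \<noteq> \<infinity>"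
    using nn_integral_nn_eval_finite[OF assms(1)] \<phi>_borel by (intro nn_integral_PInf_AE nn_eval_measurable assms) auto
  then have "AE \<omega> in M. ennreal (mvm_eval \<xi> \<phi> t \<omega>) = nn_eval (\<lambda>x. ennreal (\<phi> x)) t \<omega>"
    using AE_space by eventually_elim
      (simp add: mvm_eval_eq_enn2real_nn_eval ennreal_enn2real_if assms(1) \<phi>_borel \<phi>_nonneg)
  then have "(\<integral>\<^sup>+\<omega>\<in>B. ennreal (mvm_eval \<xi> \<phi> t \<omega>) \<partial>M) = (\<integral>\<^sup>+\<omega>\<in>B. nn_eval (\<lambda>x. ennreal (\<phi> x)) t \<omega> \<partial>M)"
    by (rule nn_set_integral_cong)
  moreover have "(\<integral>\<^sup>+\<omega>\<in>B. ennreal (mvm_eval \<xi> \<phi> t \<omega>) \<partial>M) = ennreal (\<integral>\<omega>\<in>B. mvm_eval \<xi> \<phi> t \<omega> \<partial>M)"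
    using integrable_mvm_eval[OF assms(1)] assms(2)
    by (intro nn_set_integral_eq_set_integral) (auto simp: mvm_eval_nonneg \<phi>_nonneg)
  ultimately show ?thesis
    by simp
qed

lemma martingale_mvm_eval: "martingale M F (mvm_eval \<xi> \<phi>)"
proof (rule martingale_if_set_integral_eq)
  show "mvm_eval \<xi> \<phi> t \<in> borel_measurable (F t)" "integrable M (mvm_eval \<xi> \<phi> t)" if "0 \<le> t" for t
    using that \<phi>_borel \<phi>_nonneg by (simp_all add: mvm_eval_measurable_F integrable_mvm_eval)
  fix s t B assume st: "0 \<le> s" "s \<le> t" and B: "B \<in> sets (F s)"
  have "B \<in> sets M"
    using sets_F_subset[OF st(1)] B by blast
  have \<psi>_borel: "(\<lambda>x. ennreal (\<phi> x)) \<in> borel_measurable borel"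
    using \<phi>_borel by measurable
  have "ennreal (\<integral>\<omega>\<in>B. mvm_eval \<xi> \<phi> t \<omega> \<partial>M) = (\<integral>\<^sup>+\<omega>\<in>B. nn_eval (\<lambda>x. ennreal (\<phi> x)) t \<omega> \<partial>M)"
    using st \<open>B \<in> sets M\<close> by (intro set_integral_mvm_eval) auto
  also have "\<dots> = (\<integral>\<^sup>+\<omega>\<in>B. nn_eval (\<lambda>x. ennreal (\<phi> x)) s \<omega> \<partial>M)"
    by (rule set_nn_integral_nn_eval_eq[OF st B \<psi>_borel])
  also have "\<dots> = ennreal (\<integral>\<omega>\<in>B. mvm_eval \<xi> \<phi> s \<omega> \<partial>M)"
    using st \<open>B \<in> sets M\<close> by (intro set_integral_mvm_eval[symmetric])
  moreover have "0 \<le> (\<integral>\<omega>\<in>B. mvm_eval \<xi> \<phi> r \<omega> \<partial>M)" for r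
    unfolding set_lebesgue_integral_def
    by (intro Bochner_Integration.integral_nonneg) (simp add: mvm_eval_nonneg \<phi>_nonneg)
  ultimately show "(\<integral>\<omega>\<in>B. mvm_eval \<xi> \<phi> t \<omega> \<partial>M) = (\<integral>\<omega>\<in>B. mvm_eval \<xi> \<phi> s \<omega> \<partial>M)"
    by simp
qed

lemma nn_integral_nn_eval_excess_tendsto_0:
  "(\<lambda>n. \<integral>\<^sup>+\<omega>. nn_eval (\<lambda>x. ennreal (\<phi> x - real n)) 0 \<omega> \<partial>M) \<longlonglongrightarrow> 0"
proof (rule nn_integral_nn_eval_tendsto_0)
  show "decseq (\<lambda>n x. ennreal (\<phi> x - real n))"
    by (intro decseq_SucI le_funI) (simp add: ennreal_leI)
  show "ennreal (\<phi> x - real n) \<le> ennreal (\<phi> x)" for n x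
    by (simp add: ennreal_leI)
  fix x
  obtain N :: nat where "\<phi> x \<le> real N"
    using real_arch_simple by blast
  then have "\<forall>\<^sub>F n in sequentially. ennreal (\<phi> x - real n) = 0"
    unfolding eventually_sequentially by (intro exI[of _ N] allI impI) (simp add: ennreal_eq_0_iff)
  then show "(\<lambda>n. ennreal (\<phi> x - real n)) \<longlonglongrightarrow> 0"
    by (rule tendsto_eventually)
qed (use \<phi>_borel \<phi>_finite in auto)

lemma uniformly_integrable_mvm_eval: "uniformly_integrable M {0..} (mvm_eval \<xi> \<phi>)"
  unfolding uniformly_integrable_def
proof (intro conjI ballI)
  show "integrable M (mvm_eval \<xi> \<phi> t)" if "t \<in> {0..}" for t
    using that by (simp add: integrable_mvm_eval)
  have "(\<lambda>n. 2 * \<integral>\<^sup>+\<omega>. nn_eval (\<lambda>x. ennreal (\<phi> x - real n)) 0 \<omega> \<partial>M) \<longlonglongrightarrow> 0"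
    using ennreal_tendsto_cmult[OF _ nn_integral_nn_eval_excess_tendsto_0, of 2] by simp
  then show "((\<lambda>K. SUP t\<in>{0..}. \<integral>\<^sup>+\<omega>. ennreal \<bar>mvm_eval \<xi> \<phi> t \<omega>\<bar>
      * indicator {\<omega>. K < \<bar>mvm_eval \<xi> \<phi> t \<omega>\<bar>} \<omega> \<partial>M) \<longlongrightarrow> 0) at_top"
  proof (rule tendsto_0_at_top_if_bounded_by_null_sequence)
    fix n :: nat and K :: real assume "2 * real n \<le> K"
    then show "(SUP t\<in>{0..}. \<integral>\<^sup>+\<omega>. ennreal \<bar>mvm_eval \<xi> \<phi> t \<omega>\<bar>
        * indicator {\<omega>. K < \<bar>mvm_eval \<xi> \<phi> t \<omega>\<bar>} \<omega> \<partial>M)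
      \<le> 2 * (\<integral>\<^sup>+\<omega>. nn_eval (\<lambda>x. ennreal (\<phi> x - real n)) 0 \<omega> \<partial>M)"
      using \<phi>_borel \<phi>_nonneg by (intro SUP_least tail_integral_mvm_eval_le) auto
  qed
qed

end

section \<open>Continuity of trajectories\<close>

text \<open>The finiteness clause is needed because \<^const>\<open>enn2real\<close> maps \<open>\<infinity>\<close> to \<open>0\<close>.\<close>

definition continuous_paths :: "('d \<Rightarrow> ennreal) \<Rightarrow> bool" where
  "continuous_paths \<psi> \<longleftrightarrow>
    (AE \<omega> in M. (\<forall>t\<ge>0. nn_eval \<psi> t \<omega> < \<infinity>) \<and> continuous_on {0..} (\<lambda>t. enn2real (nn_eval \<psi> t \<omega>)))"

lemma continuous_paths_zero: "continuous_paths (\<lambda>x. 0)"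
  unfolding continuous_paths_def by simp

lemma continuous_paths_add:
  assumes f: "f \<in> borel_measurable borel" "continuous_paths f"
    and g: "g \<in> borel_measurable borel" "continuous_paths g"
  shows "continuous_paths (\<lambda>x. f x + g x)"
  using f(2) g(2) AE_space unfolding continuous_paths_def
proof eventually_elim
  case (elim \<omega>)
  have sum: "nn_eval (\<lambda>x. f x + g x) t \<omega> = nn_eval f t \<omega> + nn_eval g t \<omega>" if "0 \<le> t" for t
    using that elim(3) f(1) g(1) by (intro nn_integral_add borel_measurable_\<xi>)
  have "continuous_on {0..} (\<lambda>t. enn2real (nn_eval f t \<omega>) + enn2real (nn_eval g t \<omega>))"
    using elim by (intro continuous_intros) auto
  also have "?this \<longleftrightarrow> continuous_on {0..} (\<lambda>t. enn2real (nn_eval (\<lambda>x. f x + g x) t \<omega>))"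
    using elim by (intro continuous_on_cong refl) (simp add: sum enn2real_plus)
  finally show ?case
    using elim sum by simp
qed

lemma continuous_paths_cmult:
  assumes "c < \<infinity>" "u \<in> borel_measurable borel" "continuous_paths u"
  shows "continuous_paths (\<lambda>x. c * u x)"
  using assms(3) AE_space unfolding continuous_paths_def
proof eventually_elim
  case (elim \<omega>)
  have prod: "nn_eval (\<lambda>x. c * u x) t \<omega> = c * nn_eval u t \<omega>" if "0 \<le> t" for t
    using that elim(2) assms(2) by (intro nn_integral_cmult borel_measurable_\<xi>)
  have "continuous_on {0..} (\<lambda>t. enn2real c * enn2real (nn_eval u t \<omega>))"
    using elim by (intro continuous_intros) auto
  also have "?this \<longleftrightarrow> continuous_on {0..} (\<lambda>t. enn2real (nn_eval (\<lambda>x. c * u x) t \<omega>))"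
    by (intro continuous_on_cong refl) (simp add: prod enn2real_mult)
  finally show ?case
    using elim prod assms(1) by (simp add: ennreal_mult_less_top)
qed

lemma continuous_paths_indicator_compl:
  assumes "A \<in> sets borel" "continuous_paths (indicator A)"
  shows "continuous_paths (indicator (UNIV - A))"
  using assms(2) AE_space unfolding continuous_paths_def
proof eventually_elim
  case (elim \<omega>)
  have compl: "measure (\<xi> t \<omega>) (UNIV - A) = 1 - measure (\<xi> t \<omega>) A" if "0 \<le> t" for t
    using prob_space.prob_compl[OF prob_space_\<xi>[OF that elim(2)], of A] assms(1)
      sets_\<xi>[OF that elim(2)] by (simp add: sets_eq_imp_space_eq[OF sets_\<xi>[OF that elim(2)]])
  have "continuous_on {0..} (\<lambda>t. 1 - enn2real (nn_eval (indicator A) t \<omega>))"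
    using elim by (intro continuous_intros) auto
  also have "?this \<longleftrightarrow> continuous_on {0..} (\<lambda>t. enn2real (nn_eval (indicator (UNIV - A)) t \<omega>))"
    using assms(1) elim(2) prob_space.prob_le_1[OF prob_space_\<xi>]
    by (intro continuous_on_cong refl) (simp add: nn_eval_indicator compl)
  finally show ?case
    using assms(1) elim(2) by (simp add: nn_eval_indicator)
qed

lemma AE_nn_eval_eventually_small_on_rationals:
  assumes D: "\<And>n. D n \<in> borel_measurable borel"
    and null: "(\<lambda>n. \<integral>\<^sup>+\<omega>. nn_eval (D n) 0 \<omega> \<partial>M) \<longlonglongrightarrow> 0"
  shows "AE \<omega> in M. \<forall>k::nat. \<exists>n. \<forall>q\<in>\<rat>. 0 \<le> q \<longrightarrow> nn_eval (D n) q \<omega> \<le> ennreal (inverse (Suc k))"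
  unfolding AE_all_countable
proof
  fix k :: nat
  define c where "c = ennreal (inverse (Suc k))"
  define N where "N = (\<Inter>n. {\<omega>\<in>space M. \<exists>q\<in>\<rat> \<inter> {0..}. c < nn_eval (D n) q \<omega>})"
  have countable: "countable (\<rat> \<inter> {0::real..})"
    by (simp add: countable_rat)
  have N_M: "N \<in> sets M"
    unfolding N_def using countable D by (intro sets.countable_INT image_subsetI exceedance_set_measurable) auto
  have "c * emeasure M N \<le> (\<integral>\<^sup>+\<omega>. nn_eval (D n) 0 \<omega> \<partial>M)" for n
  proof -
    have "c * emeasure M N \<le> c * emeasure M {\<omega>\<in>space M. \<exists>q\<in>\<rat> \<inter> {0..}. c < nn_eval (D n) q \<omega>}"
      using countable D by (intro mult_left_mono emeasure_mono exceedance_set_measurable) (auto simp: N_def)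
    also have "\<dots> \<le> (\<integral>\<^sup>+\<omega>. nn_eval (D n) 0 \<omega> \<partial>M)"
      using countable D by (intro maximal_inequality) auto
    finally show ?thesis .
  qed
  then have "c * emeasure M N \<le> 0"
    by (intro LIMSEQ_le_const[OF null]) auto
  then have "N \<in> null_sets M"
    using N_M by (simp add: c_def null_sets_def)
  then show "AE \<omega> in M. \<exists>n. \<forall>q\<in>\<rat>. 0 \<le> q \<longrightarrow> nn_eval (D n) q \<omega> \<le> ennreal (inverse (Suc k))"
    by (rule AE_I') (force simp: N_def c_def not_le)
qed

lemma nn_integral_nn_eval_SUP_diff_tendsto_0:
  assumes \<psi>: "\<And>n. \<psi> n \<in> borel_measurable borel" "incseq \<psi>"
    and finite: "(\<integral>\<^sup>+\<omega>. nn_eval (\<lambda>x. SUP n. \<psi> n x) 0 \<omega> \<partial>M) < \<infinity>"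
  shows "(\<lambda>n. \<integral>\<^sup>+\<omega>. nn_eval (\<lambda>x. (SUP m. \<psi> m x) - \<psi> n x) 0 \<omega> \<partial>M) \<longlonglongrightarrow> 0"
proof (rule nn_integral_nn_eval_tendsto_0[OF _ _ _ _ finite])
  have \<psi>_mono: "\<psi> n x \<le> \<psi> m x" if "n \<le> m" for n m x
    using \<psi>(2) that by (simp add: incseq_def le_fun_def)
  show "(\<lambda>x. SUP n. \<psi> n x) \<in> borel_measurable borel"
    using \<psi>(1) by (intro borel_measurable_SUP) auto
  then show "(\<lambda>x. (SUP m. \<psi> m x) - \<psi> n x) \<in> borel_measurable borel" for n
    using \<psi>(1) by (intro borel_measurable_minus_ennreal)
  show "decseq (\<lambda>n x. (SUP m. \<psi> m x) - \<psi> n x)"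
  proof (intro decseq_SucI le_funI)
    show "(SUP m. \<psi> m x) - \<psi> (Suc n) x \<le> (SUP m. \<psi> m x) - \<psi> n x" for n x
      by (rule ennreal_minus_mono[OF order.refl \<psi>_mono]) simp
  qed
  show "(SUP m. \<psi> m x) - \<psi> n x \<le> (SUP n. \<psi> n x)" for n x
    by (rule diff_le_self_ennreal)
  fix x assume finite_x: "(SUP n. \<psi> n x) < \<infinity>"
  have "incseq (\<lambda>n. \<psi> n x)"
    by (rule monoI) (rule \<psi>_mono)
  then have "(\<lambda>n. \<psi> n x) \<longlonglongrightarrow> (SUP n. \<psi> n x)"
    by (rule LIMSEQ_SUP)
  moreover have "(SUP n. \<psi> n x) \<noteq> top"
    using finite_x by (simp only: infinity_ennreal_def less_top)
  ultimately have "(\<lambda>n. (SUP m. \<psi> m x) - \<psi> n x) \<longlonglongrightarrow> (SUP m. \<psi> m x) - (SUP n. \<psi> n x)"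
    by (intro tendsto_diff_ennreal tendsto_const)
  then show "(\<lambda>n. (SUP m. \<psi> m x) - \<psi> n x) \<longlonglongrightarrow> 0"
    unfolding ennreal_diff_self[OF \<open>(SUP n. \<psi> n x) \<noteq> top\<close>] .
qed

lemma nn_eval_le_add_SUP_diff:
  fixes \<psi> :: "nat \<Rightarrow> 'd \<Rightarrow> ennreal"
  assumes "0 \<le> t" "\<omega> \<in> space M" "\<And>n. \<psi> n \<in> borel_measurable borel"
  shows "nn_eval (\<psi> m) t \<omega> \<le> nn_eval (\<psi> n) t \<omega> + nn_eval (\<lambda>x. (SUP k. \<psi> k x) - \<psi> n x) t \<omega>"
proof -
  have "\<psi> m x \<le> \<psi> n x + ((SUP k. \<psi> k x) - \<psi> n x)" for x
  proof -
    have eq: "\<psi> n x + ((SUP k. \<psi> k x) - \<psi> n x) = (SUP k. \<psi> k x)"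
      by (intro add_diff_inverse_ennreal SUP_upper) simp
    show ?thesis
      unfolding eq by (rule SUP_upper) simp
  qed
  then have "nn_eval (\<psi> m) t \<omega> \<le> nn_eval (\<lambda>x. \<psi> n x + ((SUP k. \<psi> k x) - \<psi> n x)) t \<omega>"
    by (intro nn_integral_mono)
  also have "\<dots> = nn_eval (\<psi> n) t \<omega> + nn_eval (\<lambda>x. (SUP k. \<psi> k x) - \<psi> n x) t \<omega>"
  proof (rule nn_integral_add)
    have "(\<lambda>x. (SUP k. \<psi> k x) - \<psi> n x) \<in> borel_measurable borel"
      using assms(3) by (intro borel_measurable_minus_ennreal borel_measurable_SUP) auto
    then show "(\<lambda>x. (SUP k. \<psi> k x) - \<psi> n x) \<in> borel_measurable (\<xi> t \<omega>)"
      using assms(1,2) by (intro borel_measurable_\<xi>)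
    show "\<psi> n \<in> borel_measurable (\<xi> t \<omega>)"
      using assms by (intro borel_measurable_\<xi>)
  qed
  finally show ?thesis .
qed

lemma continuous_paths_SUP:
  assumes \<psi>: "\<And>n. \<psi> n \<in> borel_measurable borel" "incseq \<psi>" "\<And>n. continuous_paths (\<psi> n)"
    and finite: "(\<integral>\<^sup>+\<omega>. nn_eval (\<lambda>x. SUP n. \<psi> n x) 0 \<omega> \<partial>M) < \<infinity>"
  shows "continuous_paths (\<lambda>x. SUP n. \<psi> n x)"
proof -
  define D where "D n = (\<lambda>x. (SUP m. \<psi> m x) - \<psi> n x)" for n
  have "D n \<in> borel_measurable borel" for n
    unfolding D_def using \<psi>(1) by (intro borel_measurable_minus_ennreal borel_measurable_SUP) auto
  then have "AE \<omega> in M. \<forall>k::nat. \<exists>n. \<forall>q\<in>\<rat>. 0 \<le> q \<longrightarrow> nn_eval (D n) q \<omega> \<le> ennreal (inverse (Suc k))"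
    using nn_integral_nn_eval_SUP_diff_tendsto_0[OF \<psi>(1,2) finite] unfolding D_def
    by (rule AE_nn_eval_eventually_small_on_rationals)
  moreover have "AE \<omega> in M. \<forall>n. (\<forall>t\<ge>0. nn_eval (\<psi> n) t \<omega> < \<infinity>)
      \<and> continuous_on {0..} (\<lambda>t. enn2real (nn_eval (\<psi> n) t \<omega>))"
    using \<psi>(3) by (simp add: continuous_paths_def AE_all_countable)
  ultimately show ?thesis
    unfolding continuous_paths_def using AE_space
  proof eventually_elim
    case (elim \<omega>)
    have SUP_eq: "nn_eval (\<lambda>x. SUP n. \<psi> n x) t \<omega> = (SUP m. nn_eval (\<psi> m) t \<omega>)" if "0 \<le> t" for t
      using \<psi>(2) borel_measurable_\<xi>[OF that elim(3) \<psi>(1)] by (rule nn_integral_monotone_convergence_SUP)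
    have "(\<forall>t\<ge>0. (SUP m. nn_eval (\<psi> m) t \<omega>) < \<infinity>)
        \<and> continuous_on {0..} (\<lambda>t. enn2real (SUP m. nn_eval (\<psi> m) t \<omega>))"
    proof (rule continuous_on_enn2real_SUP_if_uniformly_close_on_rationals)
      show "nn_eval (\<psi> m) t \<omega> < \<infinity>" if "0 \<le> t" for m t
        using elim(2) that by auto
      show "continuous_on {0..} (\<lambda>t. enn2real (nn_eval (\<psi> m) t \<omega>))" for m
        using elim(2) by auto
      show "incseq (\<lambda>m. nn_eval (\<psi> m) t \<omega>)" for t
        using \<psi>(2) by (intro monoI nn_integral_mono) (simp add: incseq_def le_fun_def)
      fix e :: real assume "0 < e"
      then obtain k where k: "inverse (real (Suc k)) < e"
        using reals_Archimedean by blast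
      obtain n where n: "\<forall>q\<in>\<rat>. 0 \<le> q \<longrightarrow> nn_eval (D n) q \<omega> \<le> ennreal (inverse (Suc k))"
        using elim(1) by blast
      have "nn_eval (\<psi> m) q \<omega> \<le> nn_eval (\<psi> n) q \<omega> + ennreal e" if "q \<in> \<rat>" "0 \<le> q" for m q
      proof -
        have "nn_eval (\<psi> m) q \<omega> \<le> nn_eval (\<psi> n) q \<omega> + nn_eval (D n) q \<omega>"
          unfolding D_def using \<open>0 \<le> q\<close> elim(3) \<psi>(1) by (rule nn_eval_le_add_SUP_diff)
        also have "nn_eval (D n) q \<omega> \<le> ennreal e"
          using n that order.trans[OF _ ennreal_leI[OF less_imp_le[OF k]]] by blast
        finally show ?thesis
          by (simp add: add_left_mono)
      qed
      then show "\<exists>n. \<forall>m. \<forall>q\<in>\<rat>. 0 \<le> q \<longrightarrow> nn_eval (\<psi> m) q \<omega> \<le> nn_eval (\<psi> n) q \<omega> + ennreal e"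
        by blast
    qed
    moreover have "continuous_on {0..} (\<lambda>t. enn2real (nn_eval (\<lambda>x. SUP n. \<psi> n x) t \<omega>))
        \<longleftrightarrow> continuous_on {0..} (\<lambda>t. enn2real (SUP m. nn_eval (\<psi> m) t \<omega>))"
      by (intro continuous_on_cong refl) (simp add: SUP_eq)
    ultimately show ?case
      using SUP_eq by simp
  qed
qed

lemma nn_integral_nn_eval_indicator_finite:
  assumes "0 \<le> t"
  shows "(\<integral>\<^sup>+\<omega>. nn_eval (indicator A) t \<omega> \<partial>M) < \<infinity>"
proof -
  have "(\<integral>\<^sup>+\<omega>. nn_eval (indicator A) t \<omega> \<partial>M) \<le> (\<integral>\<^sup>+\<omega>. nn_eval (\<lambda>_. 1) t \<omega> \<partial>M)"
    by (intro nn_integral_mono) (simp add: indicator_def)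
  also have "\<dots> = 1"
    using assms by (simp add: prob_space.emeasure_space_1[OF prob_space_\<xi>] emeasure_space_1 cong: nn_integral_cong)
  finally show ?thesis
    by (simp add: le_less_trans)
qed

lemma continuous_paths_indicator_disjoint_UN:
  fixes A :: "nat \<Rightarrow> 'd set"
  assumes "disjoint_family A" "\<And>i. A i \<in> sets borel" "\<And>i. continuous_paths (indicator (A i))"
  shows "continuous_paths (indicator (\<Union>i. A i))"
proof -
  define \<psi> where "\<psi> n = (\<lambda>x. \<Sum>i<n. indicator (A i) x :: ennreal)" for n
  have \<psi>_meas: "\<psi> n \<in> borel_measurable borel" for n
    unfolding \<psi>_def using assms(2) by measurable
  have paths: "continuous_paths (\<psi> n)" for n
  proof (induction n)
    case 0
    then show ?case
      using continuous_paths_zero by (simp add: \<psi>_def)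
  next
    case (Suc n)
    have "continuous_paths (\<lambda>x. \<psi> n x + indicator (A n) x)"
      using \<psi>_meas assms(2,3) Suc by (intro continuous_paths_add) auto
    then show ?case
      by (simp add: \<psi>_def add.commute)
  qed
  have SUP_\<psi>: "(\<lambda>x. SUP n. \<psi> n x) = indicator (\<Union>i. A i)"
    using suminf_indicator[OF assms(1)] by (simp add: \<psi>_def suminf_eq_SUP)
  have "incseq \<psi>"
    unfolding \<psi>_def by (intro monoI le_funI sum_mono2) auto
  moreover have "(\<integral>\<^sup>+\<omega>. nn_eval (\<lambda>x. SUP n. \<psi> n x) 0 \<omega> \<partial>M) < \<infinity>"
    unfolding SUP_\<psi> by (rule nn_integral_nn_eval_indicator_finite) simp
  ultimately have "continuous_paths (\<lambda>x. SUP n. \<psi> n x)"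
    by (rule continuous_paths_SUP[OF \<psi>_meas _ paths])
  then show ?thesis
    by (simp only: SUP_\<psi>)
qed

lemma nn_integral_nn_eval_add:
  assumes "0 \<le> t" "f \<in> borel_measurable borel" "g \<in> borel_measurable borel"
  shows "(\<integral>\<^sup>+\<omega>. nn_eval (\<lambda>x. f x + g x) t \<omega> \<partial>M)
    = (\<integral>\<^sup>+\<omega>. nn_eval f t \<omega> \<partial>M) + (\<integral>\<^sup>+\<omega>. nn_eval g t \<omega> \<partial>M)"
proof -
  have "(\<integral>\<^sup>+\<omega>. nn_eval (\<lambda>x. f x + g x) t \<omega> \<partial>M) = (\<integral>\<^sup>+\<omega>. nn_eval f t \<omega> + nn_eval g t \<omega> \<partial>M)"
    using assms by (intro nn_integral_cong nn_integral_add borel_measurable_\<xi>) auto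
  also have "\<dots> = (\<integral>\<^sup>+\<omega>. nn_eval f t \<omega> \<partial>M) + (\<integral>\<^sup>+\<omega>. nn_eval g t \<omega> \<partial>M)"
    using assms by (intro nn_integral_add nn_eval_measurable)
  finally show ?thesis .
qed

lemma nn_integral_nn_eval_cmult:
  assumes "0 \<le> t" "f \<in> borel_measurable borel"
  shows "(\<integral>\<^sup>+\<omega>. nn_eval (\<lambda>x. c * f x) t \<omega> \<partial>M) = c * (\<integral>\<^sup>+\<omega>. nn_eval f t \<omega> \<partial>M)"
proof -
  have "(\<integral>\<^sup>+\<omega>. nn_eval (\<lambda>x. c * f x) t \<omega> \<partial>M) = (\<integral>\<^sup>+\<omega>. c * nn_eval f t \<omega> \<partial>M)"
    using assms by (intro nn_integral_cong nn_integral_cmult borel_measurable_\<xi>) auto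
  also have "\<dots> = c * (\<integral>\<^sup>+\<omega>. nn_eval f t \<omega> \<partial>M)"
    using assms by (intro nn_integral_cmult nn_eval_measurable)
  finally show ?thesis .
qed
end

locale continuous_mvm = mvm M F \<xi>
  for M :: "'w measure" and F and \<xi> :: "real \<Rightarrow> 'w \<Rightarrow> 'd::euclidean_space measure" +
  assumes continuous_trajectories:
    "\<omega> \<in> space M \<Longrightarrow> bcont g \<Longrightarrow> continuous_on {0..} (\<lambda>t. mvm_eval \<xi> g t \<omega>)"
begin

lemma continuous_paths_bcont:
  assumes "bcont g" "\<And>x. 0 \<le> g x"
  shows "continuous_paths (\<lambda>x. ennreal (g x))"
  unfolding continuous_paths_def
proof (rule AE_I2)
  fix \<omega> assume "\<omega> \<in> space M"
  then have eq: "nn_eval (\<lambda>x. ennreal (g x)) t \<omega> = ennreal (mvm_eval \<xi> g t \<omega>)" if "0 \<le> t" for t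
    using that assms by (simp add: nn_eval_bcont)
  have "continuous_on {0..} (\<lambda>t. mvm_eval \<xi> g t \<omega>)
      \<longleftrightarrow> continuous_on {0..} (\<lambda>t. enn2real (nn_eval (\<lambda>x. ennreal (g x)) t \<omega>))"
    using assms(2) by (intro continuous_on_cong refl) (simp add: eq mvm_eval_nonneg)
  then show "(\<forall>t\<ge>0. nn_eval (\<lambda>x. ennreal (g x)) t \<omega> < \<infinity>)
      \<and> continuous_on {0..} (\<lambda>t. enn2real (nn_eval (\<lambda>x. ennreal (g x)) t \<omega>))"
    using continuous_trajectories[OF \<open>\<omega> \<in> space M\<close> assms(1)] eq by simp
qed

lemma continuous_paths_indicator_open:
  assumes "open U"
  shows "continuous_paths (indicator U)"
proof -
  obtain g where g: "\<And>n. bcont (g n)" "\<And>n x. 0 \<le> g n x" "\<And>x. incseq (\<lambda>n. g n x)"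
    "\<And>x. (SUP n. ennreal (g n x)) = indicator U x"
    using bcont_incseq_approx_indicator_open[OF assms] by blast
  have g_borel: "(\<lambda>x. ennreal (g n x)) \<in> borel_measurable borel" for n
    using bcont_borel_measurable[OF g(1)] by measurable
  have "incseq (\<lambda>n x. ennreal (g n x))"
    using g(3) by (auto simp: incseq_def le_fun_def intro: ennreal_leI)
  moreover have "(\<integral>\<^sup>+\<omega>. nn_eval (\<lambda>x. SUP n. ennreal (g n x)) 0 \<omega> \<partial>M) < \<infinity>"
    using nn_integral_nn_eval_indicator_finite[of 0 U] by (simp add: g(4))
  ultimately have "continuous_paths (\<lambda>x. SUP n. ennreal (g n x))"
    by (rule continuous_paths_SUP[OF g_borel _ continuous_paths_bcont[OF g(1,2)]])
  then show ?thesis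
    by (simp add: g(4))
qed

lemma continuous_paths_indicator:
  assumes "A \<in> sets borel"
  shows "continuous_paths (indicator A)"
proof -
  have Int_stable: "Int_stable {U::'d set. open U}"
    by (auto simp: Int_stable_def)
  have closed: "{U::'d set. open U} \<subseteq> Pow UNIV"
    by simp
  have "A \<in> sigma_sets UNIV {U. open U}"
    using assms by (simp add: sets_borel)
  then show ?thesis
  proof (induction rule: sigma_sets_induct_disjoint[OF Int_stable closed, consumes 1,
        case_names basic empty compl union])
    case (basic U)
    then show ?case
      by (simp add: continuous_paths_indicator_open)
  next
    case empty
    then show ?case
      using continuous_paths_zero by simp
  next
    case (compl A)
    then show ?case
      by (intro continuous_paths_indicator_compl) (simp_all add: sets_borel)
  next
    case (union A)
    then show ?case
      by (intro continuous_paths_indicator_disjoint_UN) (auto simp: sets_borel)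
  qed
qed

lemma continuous_paths_borel:
  assumes "\<psi> \<in> borel_measurable borel" "(\<integral>\<^sup>+\<omega>. nn_eval \<psi> 0 \<omega> \<partial>M) < \<infinity>"
  shows "continuous_paths \<psi>"
  using assms
proof (induction rule: borel_measurable_induct)
  case (cong f g)
  then have "f = g"
    by auto
  with cong show ?case
    by simp
next
  case (set A)
  then show ?case
    by (simp add: continuous_paths_indicator)
next
  case (mult u c)
  show ?case
  proof (cases "c = 0")
    case True
    then show ?thesis
      using continuous_paths_zero by simp
  next
    case False
    then have "(\<integral>\<^sup>+\<omega>. nn_eval u 0 \<omega> \<partial>M) < \<infinity>"
      using mult.prems nn_integral_nn_eval_cmult[OF order.refl mult.hyps(2), of c]
      by (auto simp: ennreal_mult_less_top)
    then show ?thesis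
      using mult by (intro continuous_paths_cmult) auto
  qed
next
  case (add u v)
  then have "(\<integral>\<^sup>+\<omega>. nn_eval v 0 \<omega> \<partial>M) < \<infinity>" "(\<integral>\<^sup>+\<omega>. nn_eval u 0 \<omega> \<partial>M) < \<infinity>"
    using nn_integral_nn_eval_add[OF order.refl, of v u] by auto
  then show ?case
    using add by (intro continuous_paths_add) auto
next
  case (seq U)
  have SUP_U: "(SUP i. U i) = (\<lambda>x. SUP i. U i x)"
    by (rule ext) (simp only: SUP_apply)
  have "(\<integral>\<^sup>+\<omega>. nn_eval (U i) 0 \<omega> \<partial>M) \<le> (\<integral>\<^sup>+\<omega>. nn_eval (SUP i. U i) 0 \<omega> \<partial>M)" for i
    by (intro nn_integral_mono) (auto simp: SUP_U intro: SUP_upper)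
  then have paths: "continuous_paths (U i)" for i
    using seq.prems by (intro seq.IH) (auto intro: le_less_trans)
  have "(\<integral>\<^sup>+\<omega>. nn_eval (\<lambda>x. SUP i. U i x) 0 \<omega> \<partial>M) < \<infinity>"
    using seq.prems unfolding SUP_U .
  then have "continuous_paths (\<lambda>x. SUP i. U i x)"
    by (rule continuous_paths_SUP[OF seq.hyps(1) \<open>incseq U\<close> paths])
  then show ?case
    unfolding SUP_U .
qed

lemma AE_continuous_mvm_eval:
  assumes "\<phi> \<in> borel_measurable borel" "\<And>x. 0 \<le> \<phi> x"
    and "(\<integral>\<^sup>+\<omega>. nn_eval (\<lambda>x. ennreal (\<phi> x)) 0 \<omega> \<partial>M) < \<infinity>"
  shows "AE \<omega> in M. continuous_on {0..} (\<lambda>t. mvm_eval \<xi> \<phi> t \<omega>)"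
proof -
  have "continuous_paths (\<lambda>x. ennreal (\<phi> x))"
    using assms by (intro continuous_paths_borel) auto
  with AE_space show ?thesis
    unfolding continuous_paths_def
  proof eventually_elim
    case (elim \<omega>)
    have "continuous_on {0..} (\<lambda>t. enn2real (nn_eval (\<lambda>x. ennreal (\<phi> x)) t \<omega>))
        \<longleftrightarrow> continuous_on {0..} (\<lambda>t. mvm_eval \<xi> \<phi> t \<omega>)"
      using elim(1) assms(1,2) by (intro continuous_on_cong refl) (simp add: mvm_eval_eq_enn2real_nn_eval)
    then show ?case
      using elim(2) by simp
  qed
qed

end

theorem lemma2p2:
  fixes M :: "'w measure" and F :: "real \<Rightarrow> 'w measure"
    and \<xi> :: "real \<Rightarrow> 'w \<Rightarrow> 'd::euclidean_space measure"
    and \<phi> :: "'d \<Rightarrow> real"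
  assumes "continuous_MVM M F \<xi>"
    and "\<phi> \<in> borel_measurable borel"
    and "\<And>x. 0 \<le> \<phi> x"
    and "(\<integral>\<^sup>+\<omega>. (\<integral>\<^sup>+x. ennreal (\<phi> x) \<partial>(\<xi> 0 \<omega>)) \<partial>M) < \<infinity>"
  shows "martingale M F (mvm_eval \<xi> \<phi>)
    \<and> (AE \<omega> in M. continuous_on {0..} (\<lambda>t. mvm_eval \<xi> \<phi> t \<omega>))
    \<and> uniformly_integrable M {0..} (mvm_eval \<xi> \<phi>)"
proof -
  interpret continuous_mvm M F \<xi>
    using assms(1) unfolding continuous_MVM_def continuous_mvm_def continuous_mvm_axioms_def mvm_def
    by blast
  show ?thesis
    using martingale_mvm_eval AE_continuous_mvm_eval uniformly_integrable_mvm_eval assms(2-4)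
    by blast
qed

end
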